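(* For each positive integer $i$ let $\mathcal{F}_i$ be an edge-coloured digraph with $i$ vertices all of whose edges are double. For each composition $\alpha=(\alpha_1,\dots,\alpha_k)\vDash n$, let $\mathcal{F}_\alpha$ be the solid sum $\mathcal{F}_{\alpha_1}\ \text{solid-sum}\ \mathcal{F}_{\alpha_2}\ \text{solid-sum}\cdots\text{solid-sum}\ \mathcal{F}_{\alpha_k}$. Then $\{\mathscr{X}_{\mathcal{F}_\alpha}(x):\alpha\vDash n\}$ is a basis of $\mathrm{QSym}_n(x)$.
   Context: An edge-coloured digraph is a finite simple digraph with each edge of type dashed, solid ($a\rightarrow b$) or double ($a\Rightarrow b$). The solid sum of $G_1$ and $G_2$ is their disjoint union together with a solid edge $(a,b)$ for every $a\in V(G_1)$, $b\in V(G_2)$ (this operation is associative). A proper vertex-colouring is $\kappa:V\to\mathbb{P}$ with $\kappa(a)\ne\kappa(b)$, $\kappa(a)<\kappa(b)$, $\kappa(a)\le\kappa(b)$ for dashed, solid, double edges $(a,b)$ respectively, and $\mathscr{X}_G(x)=\sum_\kappa\prod_{a\in V(G)}x_{\kappa(a)}$ over proper vertex-colourings, in commuting variables. $\mathrm{QSym}_n(x)$ is the space of quasisymmetric functions homogeneous of degree $n$ (formal power series such that for each composition $(\beta_1,\dots,\beta_k)$ of $n$ all monomials $x_{i_1}^{\beta_1}\cdots x_{i_k}^{\beta_k}$ with $i_1<\dots<i_k$ have the same coefficient, and no other monomials occur). *)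

theory Defs
  imports Complex_Main "HOL-Library.FuncSet"
begin

datatype ecol = Dashed | Solid | Double

text \<open>An edge-coloured digraph on vertex type 'v: a vertex set together with a
partial edge-colouring; E a b = Some c means there is an edge (a,b) of type c.\<close>
type_synonym 'v ecdigraph = "'v set \<times> ('v \<Rightarrow> 'v \<Rightarrow> ecol option)"

definition verts :: "'v ecdigraph \<Rightarrow> 'v set" where "verts G = fst G"
definition edge :: "'v ecdigraph \<Rightarrow> 'v \<Rightarrow> 'v \<Rightarrow> ecol option" where "edge G = snd G"

definition ecdigraph :: "'v ecdigraph \<Rightarrow> bool" where
  "ecdigraph G \<longleftrightarrow> finite (verts G) \<and>
     (\<forall>a b. edge G a b \<noteq> None \<longrightarrow> a \<in> verts G \<and> b \<in> verts G \<and> a \<noteq> b)"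

text \<open>Iterated solid sum G_1 solid-sum ... solid-sum G_k of a list of graphs
(well defined by associativity); block j's vertices are tagged with j.\<close>
definition solid_sum_list :: "'v ecdigraph list \<Rightarrow> (nat \<times> 'v) ecdigraph" where
  "solid_sum_list Gs =
     (let V = {(j, v). j < length Gs \<and> v \<in> verts (Gs ! j)} in
      (V, \<lambda>(j, a) (j', b).
            if (j, a) \<in> V \<and> (j', b) \<in> V then
              (if j = j' then edge (Gs ! j) a b
               else if j < j' then Some Solid else None)
            else None))"

definition proper_colouring :: "'v ecdigraph \<Rightarrow> ('v \<Rightarrow> nat) \<Rightarrow> bool" where
  "proper_colouring G \<kappa> \<longleftrightarrow> (\<forall>a \<in> verts G. \<kappa> a \<ge> 1) \<and>
     (\<forall>a b. (edge G a b = Some Dashed \<longrightarrow> \<kappa> a \<noteq> \<kappa> b) \<and>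
            (edge G a b = Some Solid \<longrightarrow> \<kappa> a < \<kappa> b) \<and>
            (edge G a b = Some Double \<longrightarrow> \<kappa> a \<le> \<kappa> b))"

text \<open>Formal power series in commuting variables x_1, x_2, ... with rational
coefficients: a function from exponent vectors m (m i = exponent of x_i) to
coefficients.\<close>
type_synonym fps_x = "(nat \<Rightarrow> nat) \<Rightarrow> rat"

definition monomial :: "(nat \<Rightarrow> nat) \<Rightarrow> bool" where
  "monomial m \<longleftrightarrow> finite {i. m i \<noteq> 0} \<and> m 0 = 0"

definition chromX :: "'v ecdigraph \<Rightarrow> fps_x" where
  "chromX G m = of_nat (card {\<kappa> \<in> verts G \<rightarrow>\<^sub>E UNIV. proper_colouring G \<kappa> \<and>
        (\<forall>j. card {a \<in> verts G. \<kappa> a = j} = m j)})"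

definition flat :: "(nat \<Rightarrow> nat) \<Rightarrow> nat list" where
  "flat m = map m (sorted_list_of_set {i. m i \<noteq> 0})"

definition compositions :: "nat \<Rightarrow> nat list set" where
  "compositions n = {\<alpha>. (\<forall>a \<in> set \<alpha>. 0 < a) \<and> sum_list \<alpha> = n}"

definition QSym :: "nat \<Rightarrow> fps_x set" where
  "QSym n = {f. (\<forall>m. f m \<noteq> 0 \<longrightarrow> monomial m \<and> flat m \<in> compositions n) \<and>
                (\<forall>m m'. monomial m \<and> monomial m' \<and> flat m = flat m' \<and> flat m \<in> compositions n
                        \<longrightarrow> f m = f m')}"

definition is_QSym_basis :: "nat \<Rightarrow> (nat list \<Rightarrow> fps_x) \<Rightarrow> bool" where
  "is_QSym_basis n B \<longleftrightarrow>
     (\<forall>\<alpha> \<in> compositions n. B \<alpha> \<in> QSym n) \<and>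
     (\<forall>c. (\<forall>m. (\<Sum>\<alpha>\<in>compositions n. c \<alpha> * B \<alpha> m) = 0) \<longrightarrow> (\<forall>\<alpha>\<in>compositions n. c \<alpha> = 0)) \<and>
     (\<forall>f \<in> QSym n. \<exists>c. \<forall>m. f m = (\<Sum>\<alpha>\<in>compositions n. c \<alpha> * B \<alpha> m))"

end

(* A proper colouring stays proper when its colours are replaced by an order-isomorphic set of
   colours, so every chromatic function X_G is quasisymmetric and is determined by its coefficients
   at the monomials x_1^gamma_1 ... x_k^gamma_k.  In a colouring of F_alpha with these colours,
   the solid edges force the colours to increase strictly from block to block; hence
   length alpha <= length gamma, with equality only if block j is coloured constantly j, which
   forces gamma = alpha and is a proper colouring because the blocks have only double edges.
   So the matrix expressing the X_(F_alpha) in the monomial basis M_gamma is unitriangular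
   with respect to length, and the X_(F_alpha) form a basis as the M_gamma do. *)

theory Submission
  imports Defs
begin

definition colourings :: "'v ecdigraph \<Rightarrow> (nat \<Rightarrow> nat) \<Rightarrow> ('v \<Rightarrow> nat) set" where
  "colourings G m = {\<kappa> \<in> verts G \<rightarrow>\<^sub>E UNIV. proper_colouring G \<kappa> \<and>
        (\<forall>j. card {a \<in> verts G. \<kappa> a = j} = m j)}"

lemma chromX_eq_card_colourings: "chromX G m = of_nat (card (colourings G m))"
  unfolding chromX_def colourings_def by simp

lemma colourings_colour_in_support:
  assumes "finite (verts G)" "\<kappa> \<in> colourings G m" "a \<in> verts G"
  shows "m (\<kappa> a) \<noteq> 0"
proof -
  have "card {b \<in> verts G. \<kappa> b = \<kappa> a} = m (\<kappa> a)"
    using assms(2) unfolding colourings_def by auto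
  moreover have "card {b \<in> verts G. \<kappa> b = \<kappa> a} \<noteq> 0"
    using assms by auto
  ultimately show ?thesis by simp
qed

lemma finite_colourings:
  assumes "finite (verts G)" "monomial m"
  shows "finite (colourings G m)"
proof (rule finite_subset)
  show "colourings G m \<subseteq> verts G \<rightarrow>\<^sub>E {i. m i \<noteq> 0}"
  proof
    fix \<kappa> assume \<kappa>: "\<kappa> \<in> colourings G m"
    then show "\<kappa> \<in> verts G \<rightarrow>\<^sub>E {i. m i \<noteq> 0}"
      using colourings_colour_in_support[OF assms(1) \<kappa>] by (auto simp: colourings_def PiE_iff)
  qed
  show "finite (verts G \<rightarrow>\<^sub>E {i. m i \<noteq> 0})"
    using assms unfolding monomial_def by (intro finite_PiE) auto
qed

lemma colourings_imp_monomial_composition: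
  assumes fin: "finite (verts G)" and \<kappa>: "\<kappa> \<in> colourings G m"
  shows "monomial m \<and> flat m \<in> compositions (card (verts G))"
proof -
  have proper: "proper_colouring G \<kappa>" and count: "\<And>j. card {a \<in> verts G. \<kappa> a = j} = m j"
    using \<kappa> unfolding colourings_def by auto
  have support: "{j. m j \<noteq> 0} = \<kappa> ` verts G"
    using colourings_colour_in_support[OF fin \<kappa>] count[symmetric] by (force simp: card_eq_0_iff fin)
  have "{a \<in> verts G. \<kappa> a = 0} = {}"
    using proper unfolding proper_colouring_def by fastforce
  then have "m 0 = 0"
    using count[of 0] by (metis card.empty)
  then have "monomial m"
    unfolding monomial_def support using fin by simp
  moreover have "sum_list (flat m) = card (verts G)"
  proof -
    have "sum_list (flat m) = (\<Sum>j\<in>\<kappa> ` verts G. card {a \<in> verts G. \<kappa> a = j})"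
      unfolding flat_def support count by (simp add: sum_list_distinct_conv_sum_set fin)
    also have "\<dots> = card (verts G)"
      using sum.image_gen[OF fin, of "\<lambda>_. 1::nat" \<kappa>] by simp
    finally show ?thesis .
  qed
  moreover have "\<forall>a\<in>set (flat m). 0 < a"
    unfolding flat_def support using fin colourings_colour_in_support[OF fin \<kappa>] by auto
  ultimately show ?thesis
    unfolding compositions_def by auto
qed

lemma sorted_lists_order_iso:
  fixes xs ys :: "'a::linorder list"
  assumes xs: "sorted_wrt (<) xs" and ys: "sorted_wrt (<) ys" and len: "length xs = length ys"
  obtains \<phi> where "strict_mono_on (set xs) \<phi>" "\<phi> ` set xs = set ys"
    "\<And>i. i < length xs \<Longrightarrow> \<phi> (xs ! i) = ys ! i"
proof
  define \<phi> where "\<phi> x = the (map_of (zip xs ys) x)" for x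
  show \<phi>_nth: "\<phi> (xs ! i) = ys ! i" if "i < length xs" for i
  proof -
    have "distinct xs"
      using xs by (simp add: strict_sorted_iff)
    then have "map_of (zip xs ys) (xs ! i) = Some (ys ! i)"
      using len that by (intro map_of_zip_nth) simp_all
    then show ?thesis
      unfolding \<phi>_def by simp
  qed
  show "strict_mono_on (set xs) \<phi>"
  proof (rule strict_mono_onI)
    fix x y assume "x \<in> set xs" "y \<in> set xs" "x < y"
    then obtain i j where "i < length xs" "x = xs ! i" "j < length xs" "y = xs ! j"
      by (metis in_set_conv_nth)
    then show "\<phi> x < \<phi> y"
      using sorted_wrt_nth_less[OF xs] sorted_wrt_nth_less[OF ys] \<open>x < y\<close> \<phi>_nth len
      by (metis linorder_neq_iff order_less_asym)
  qed
  have "\<phi> ` set xs = (\<lambda>i. \<phi> (xs ! i)) ` {0..<length xs}"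
    using nth_image[of "length xs" xs] by (metis take_all order_refl image_image)
  also have "\<dots> = set ys"
    using nth_image[of "length ys" ys] \<phi>_nth len by (auto intro!: image_cong)
  finally show "\<phi> ` set xs = set ys" .
qed

lemma flat_eq_imp_order_iso:
  assumes m: "monomial m" and m': "monomial m'" and flat: "flat m = flat m'"
  obtains \<phi> where "strict_mono_on {i. m i \<noteq> 0} \<phi>" "\<phi> ` {i. m i \<noteq> 0} = {i. m' i \<noteq> 0}"
    "\<And>i. m i \<noteq> 0 \<Longrightarrow> m' (\<phi> i) = m i"
proof -
  define xs where "xs = sorted_list_of_set {i. m i \<noteq> 0}"
  define ys where "ys = sorted_list_of_set {i. m' i \<noteq> 0}"
  have set_xs: "set xs = {i. m i \<noteq> 0}" and set_ys: "set ys = {i. m' i \<noteq> 0}"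
    using m m' unfolding xs_def ys_def monomial_def by auto
  have map_eq: "map m xs = map m' ys"
    using flat unfolding flat_def xs_def ys_def .
  then have len: "length xs = length ys"
    by (metis length_map)
  obtain \<phi> where \<phi>: "strict_mono_on (set xs) \<phi>" "\<phi> ` set xs = set ys"
    and \<phi>_nth: "\<And>i. i < length xs \<Longrightarrow> \<phi> (xs ! i) = ys ! i"
    using sorted_lists_order_iso[OF _ _ len] unfolding xs_def ys_def
    by (metis strict_sorted_list_of_set)
  have "m' (\<phi> x) = m x" if "x \<in> set xs" for x
    using that map_eq len \<phi>_nth by (metis in_set_conv_nth nth_map)
  then show thesis
    using that \<phi> unfolding set_xs set_ys by blast
qed

lemma proper_colouring_relabel:
  assumes G: "ecdigraph G" and proper: "proper_colouring G \<kappa>" and range: "\<kappa> ` verts G \<subseteq> S"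
    and \<phi>: "strict_mono_on S \<phi>" and pos: "\<And>s. s \<in> S \<Longrightarrow> 1 \<le> \<phi> s"
  shows "proper_colouring G (restrict (\<lambda>a. \<phi> (\<kappa> a)) (verts G))"
  unfolding proper_colouring_def
proof (intro conjI allI ballI)
  fix a assume "a \<in> verts G"
  then show "1 \<le> restrict (\<lambda>a. \<phi> (\<kappa> a)) (verts G) a"
    using range pos by auto
next
  fix a b
  let ?\<kappa>' = "restrict (\<lambda>a. \<phi> (\<kappa> a)) (verts G)"
  have ends: "?\<kappa>' a = \<phi> (\<kappa> a) \<and> ?\<kappa>' b = \<phi> (\<kappa> b) \<and> \<kappa> a \<in> S \<and> \<kappa> b \<in> S"
    if "edge G a b \<noteq> None"
  proof -
    have "a \<in> verts G" "b \<in> verts G"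
      using G that unfolding ecdigraph_def by auto
    then show ?thesis
      using range by auto
  qed
  show "edge G a b = Some Dashed \<longrightarrow> ?\<kappa>' a \<noteq> ?\<kappa>' b"
    using ends proper strict_mono_on_eq[OF \<phi>] unfolding proper_colouring_def by fastforce
  show "edge G a b = Some Solid \<longrightarrow> ?\<kappa>' a < ?\<kappa>' b"
    using ends proper strict_mono_on_less[OF \<phi>] unfolding proper_colouring_def by fastforce
  show "edge G a b = Some Double \<longrightarrow> ?\<kappa>' a \<le> ?\<kappa>' b"
    using ends proper strict_mono_on_less_eq[OF \<phi>] unfolding proper_colouring_def by fastforce
qed

lemma relabel_in_colourings:
  assumes G: "ecdigraph G" and m': "monomial m'"
    and \<phi>: "strict_mono_on {i. m i \<noteq> 0} \<phi>" and image: "\<phi> ` {i. m i \<noteq> 0} = {i. m' i \<noteq> 0}"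
    and m'_\<phi>: "\<And>i. m i \<noteq> 0 \<Longrightarrow> m' (\<phi> i) = m i"
    and \<kappa>: "\<kappa> \<in> colourings G m"
  shows "restrict (\<lambda>a. \<phi> (\<kappa> a)) (verts G) \<in> colourings G m'"
proof -
  let ?S = "{i. m i \<noteq> 0}" and ?\<kappa>' = "restrict (\<lambda>a. \<phi> (\<kappa> a)) (verts G)"
  have range: "\<kappa> ` verts G \<subseteq> ?S"
    using colourings_colour_in_support[OF _ \<kappa>] G unfolding ecdigraph_def by blast
  have pos: "1 \<le> \<phi> s" if "s \<in> ?S" for s
  proof -
    have "m' (\<phi> s) \<noteq> 0"
      using image that by blast
    moreover have "m' 0 = 0"
      using m' unfolding monomial_def by simp
    ultimately show ?thesis
      by (cases "\<phi> s") auto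
  qed
  have "card {a \<in> verts G. ?\<kappa>' a = j} = m' j" for j
  proof (cases "j \<in> \<phi> ` ?S")
    case True
    then obtain s where s: "s \<in> ?S" "j = \<phi> s"
      by blast
    then have "{a \<in> verts G. ?\<kappa>' a = j} = {a \<in> verts G. \<kappa> a = s}"
      using range strict_mono_on_eq[OF \<phi>] by auto
    then show ?thesis
      using \<kappa> s m'_\<phi> unfolding colourings_def by simp
  next
    case False
    then have "{a \<in> verts G. ?\<kappa>' a = j} = {}"
      using range by auto
    moreover have "m' j = 0"
      using False image by auto
    ultimately show ?thesis
      by (simp only: card.empty)
  qed
  then show ?thesis
    using proper_colouring_relabel[OF G _ range \<phi> pos] \<kappa> unfolding colourings_def by auto
qed

lemma card_colourings_le_relabel:
  assumes G: "ecdigraph G" and m': "monomial m'"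
    and \<phi>: "strict_mono_on {i. m i \<noteq> 0} \<phi>" and image: "\<phi> ` {i. m i \<noteq> 0} = {i. m' i \<noteq> 0}"
    and m'_\<phi>: "\<And>i. m i \<noteq> 0 \<Longrightarrow> m' (\<phi> i) = m i"
  shows "card (colourings G m) \<le> card (colourings G m')"
proof -
  define relabel where "relabel \<kappa> = restrict (\<lambda>a. \<phi> (\<kappa> a)) (verts G)" for \<kappa>
  have fin: "finite (verts G)"
    using G unfolding ecdigraph_def by blast
  have "inj_on relabel (colourings G m)"
  proof (rule inj_onI)
    fix \<kappa> \<kappa>' assume \<kappa>: "\<kappa> \<in> colourings G m" and \<kappa>': "\<kappa>' \<in> colourings G m"
      and eq: "relabel \<kappa> = relabel \<kappa>'"
    show "\<kappa> = \<kappa>'"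
    proof (rule PiE_ext)
      show "\<kappa> \<in> verts G \<rightarrow>\<^sub>E UNIV" "\<kappa>' \<in> verts G \<rightarrow>\<^sub>E UNIV"
        using \<kappa> \<kappa>' unfolding colourings_def by auto
      fix a assume a: "a \<in> verts G"
      then have "\<phi> (\<kappa> a) = \<phi> (\<kappa>' a)"
        using fun_cong[OF eq, of a] unfolding relabel_def by simp
      then show "\<kappa> a = \<kappa>' a"
        using colourings_colour_in_support[OF fin _ a] \<kappa> \<kappa>' strict_mono_on_eq[OF \<phi>] by blast
    qed
  qed
  moreover have "relabel ` colourings G m \<subseteq> colourings G m'"
    using relabel_in_colourings[OF assms] unfolding relabel_def by blast
  ultimately show ?thesis
    using finite_colourings[OF fin m'] by (rule card_inj_on_le)
qed

lemma chromX_in_QSym: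
  assumes G: "ecdigraph G"
  shows "chromX G \<in> QSym (card (verts G))"
  unfolding QSym_def mem_Collect_eq
proof (rule conjI; intro allI impI)
  have fin: "finite (verts G)"
    using G unfolding ecdigraph_def by blast
  fix m assume "chromX G m \<noteq> 0"
  then obtain \<kappa> where "\<kappa> \<in> colourings G m"
    unfolding chromX_eq_card_colourings by fastforce
  then show "monomial m \<and> flat m \<in> compositions (card (verts G))"
    using colourings_imp_monomial_composition[OF fin] by blast
next
  fix m m' assume "monomial m \<and> monomial m' \<and> flat m = flat m' \<and> flat m \<in> compositions (card (verts G))"
  then have m: "monomial m" and m': "monomial m'" and flat: "flat m = flat m'"
    by auto
  have "card (colourings G m) \<le> card (colourings G m')"
    by (metis flat_eq_imp_order_iso[OF m m' flat] card_colourings_le_relabel[OF G m'])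
  moreover have "card (colourings G m') \<le> card (colourings G m)"
    by (metis flat_eq_imp_order_iso[OF m' m flat[symmetric]] card_colourings_le_relabel[OF G m])
  ultimately show "chromX G m = chromX G m'"
    unfolding chromX_eq_card_colourings by simp
qed

definition comp_monomial :: "nat list \<Rightarrow> nat \<Rightarrow> nat" where
  "comp_monomial \<gamma> i = (if 1 \<le> i \<and> i \<le> length \<gamma> then \<gamma> ! (i - 1) else 0)"

definition monomial_qsym :: "nat list \<Rightarrow> fps_x" where
  "monomial_qsym \<gamma> m = (if monomial m \<and> flat m = \<gamma> then 1 else 0)"

lemma compositions_pos: "\<gamma> \<in> compositions n \<Longrightarrow> a \<in> set \<gamma> \<Longrightarrow> 0 < a"
  unfolding compositions_def by auto

lemma compositions_length_le: "\<gamma> \<in> compositions n \<Longrightarrow> length \<gamma> \<le> n"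
proof -
  have "length xs \<le> sum_list xs" if "\<forall>a\<in>set xs. 0 < a" for xs :: "nat list"
    using that by (induction xs) auto
  then show "\<gamma> \<in> compositions n \<Longrightarrow> length \<gamma> \<le> n"
    unfolding compositions_def by auto
qed

lemma finite_compositions: "finite (compositions n)"
proof (rule finite_subset)
  show "compositions n \<subseteq> {xs. set xs \<subseteq> {..n} \<and> length xs \<le> n}"
    using compositions_length_le unfolding compositions_def by (auto simp: member_le_sum_list)
  show "finite {xs. set xs \<subseteq> {..n} \<and> length xs \<le> n}"
    by (rule finite_lists_length_le) simp
qed

lemma
  assumes "\<And>a. a \<in> set \<gamma> \<Longrightarrow> 0 < a"
  shows monomial_comp_monomial: "monomial (comp_monomial \<gamma>)"
    and flat_comp_monomial: "flat (comp_monomial \<gamma>) = \<gamma>"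
proof -
  have support: "{i. comp_monomial \<gamma> i \<noteq> 0} = {1..<Suc (length \<gamma>)}"
    using assms unfolding comp_monomial_def by (auto simp: nth_mem)
  show "monomial (comp_monomial \<gamma>)"
    unfolding monomial_def support by (simp add: comp_monomial_def)
  show "flat (comp_monomial \<gamma>) = \<gamma>"
    unfolding flat_def support sorted_list_of_set_range
    by (rule nth_equalityI) (simp_all add: comp_monomial_def nth_upt del: upt_Suc)
qed

lemma QSym_eq_sum_monomial_qsym:
  assumes f: "f \<in> QSym n"
  shows "f m = (\<Sum>\<gamma>\<in>compositions n. f (comp_monomial \<gamma>) * monomial_qsym \<gamma> m)"
proof (cases "monomial m \<and> flat m \<in> compositions n")
  case True
  have "(\<Sum>\<gamma>\<in>compositions n. f (comp_monomial \<gamma>) * monomial_qsym \<gamma> m)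
      = (\<Sum>\<gamma>\<in>compositions n. if \<gamma> = flat m then f (comp_monomial \<gamma>) else 0)"
    using True by (intro sum.cong) (auto simp: monomial_qsym_def)
  also have "\<dots> = f (comp_monomial (flat m))"
    using True finite_compositions by simp
  also have "\<dots> = f m"
  proof -
    have "\<And>a. a \<in> set (flat m) \<Longrightarrow> 0 < a"
      using True compositions_pos by blast
    note monomial_comp_monomial[OF this] flat_comp_monomial[OF this]
    moreover have "\<forall>m m'. monomial m \<and> monomial m' \<and> flat m = flat m' \<and> flat m \<in> compositions n
        \<longrightarrow> f m = f m'"
      using f unfolding QSym_def by blast
    ultimately show ?thesis
      using True by (metis (no_types))
  qed
  finally show ?thesis ..
next
  case False
  then have "f m = 0"
    using f unfolding QSym_def by blast
  moreover have "monomial_qsym \<gamma> m = 0" if "\<gamma> \<in> compositions n" for \<gamma>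
    using False that unfolding monomial_qsym_def by auto
  ultimately show ?thesis
    by simp
qed

definition family_span :: "'i set \<Rightarrow> ('i \<Rightarrow> 'x \<Rightarrow> 'a::comm_ring_1) \<Rightarrow> ('x \<Rightarrow> 'a) set" where
  "family_span C B = {f. \<exists>c. \<forall>m. f m = (\<Sum>\<alpha>\<in>C. c \<alpha> * B \<alpha> m)}"

lemma family_span_member:
  assumes "finite C" "\<alpha> \<in> C"
  shows "B \<alpha> \<in> family_span C B"
proof -
  have "B \<alpha> m = (\<Sum>\<beta>\<in>C. (if \<beta> = \<alpha> then 1 else 0) * B \<beta> m)" for m
    using assms by (simp add: if_distrib[of "\<lambda>c. c * _"] cong: if_cong)
  then show ?thesis
    unfolding family_span_def by (intro CollectI exI allI)
qed

lemma family_span_diff: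
  assumes "f \<in> family_span C B" "g \<in> family_span C B"
  shows "(\<lambda>m. f m - g m) \<in> family_span C B"
proof -
  obtain c d where "\<And>m. f m = (\<Sum>\<alpha>\<in>C. c \<alpha> * B \<alpha> m)" "\<And>m. g m = (\<Sum>\<alpha>\<in>C. d \<alpha> * B \<alpha> m)"
    using assms unfolding family_span_def by blast
  then show ?thesis
    unfolding family_span_def
    by (auto intro!: exI[of _ "\<lambda>\<alpha>. c \<alpha> - d \<alpha>"] simp: sum_subtractf left_diff_distrib)
qed

lemma family_span_sum:
  assumes "\<And>x. x \<in> X \<Longrightarrow> g x \<in> family_span C B"
  shows "(\<lambda>m. \<Sum>x\<in>X. a x * g x m) \<in> family_span C B"
proof -
  have "\<forall>x\<in>X. \<exists>c. \<forall>m. g x m = (\<Sum>\<alpha>\<in>C. c \<alpha> * B \<alpha> m)"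
    using assms unfolding family_span_def by blast
  then obtain c where c: "\<And>x m. x \<in> X \<Longrightarrow> g x m = (\<Sum>\<alpha>\<in>C. c x \<alpha> * B \<alpha> m)"
    by (metis bchoice)
  have "(\<Sum>x\<in>X. a x * g x m) = (\<Sum>\<alpha>\<in>C. (\<Sum>x\<in>X. a x * c x \<alpha>) * B \<alpha> m)" for m
  proof -
    have "(\<Sum>x\<in>X. a x * g x m) = (\<Sum>x\<in>X. \<Sum>\<alpha>\<in>C. a x * c x \<alpha> * B \<alpha> m)"
      using c by (simp add: sum_distrib_left mult.assoc)
    also have "\<dots> = (\<Sum>\<alpha>\<in>C. (\<Sum>x\<in>X. a x * c x \<alpha>) * B \<alpha> m)"
      by (subst sum.swap) (simp add: sum_distrib_right)
    finally show ?thesis .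
  qed
  then show ?thesis
    unfolding family_span_def by (intro CollectI exI allI)
qed

context
  fixes C :: "'i set" and B :: "'i \<Rightarrow> 'x \<Rightarrow> 'a::comm_ring_1" and p :: "'i \<Rightarrow> 'x" and r :: "'i \<Rightarrow> nat"
  assumes finite_C: "finite C"
    and diagonal: "\<And>\<alpha>. \<alpha> \<in> C \<Longrightarrow> B \<alpha> (p \<alpha>) = 1"
    and triangular: "\<And>\<alpha> \<gamma>. \<alpha> \<in> C \<Longrightarrow> \<gamma> \<in> C \<Longrightarrow> \<gamma> \<noteq> \<alpha> \<Longrightarrow> B \<alpha> (p \<gamma>) \<noteq> 0 \<Longrightarrow> r \<alpha> < r \<gamma>"
begin

lemma unitriangular_independent:
  assumes zero: "\<And>m. (\<Sum>\<alpha>\<in>C. c \<alpha> * B \<alpha> m) = 0"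
  shows "\<alpha> \<in> C \<Longrightarrow> c \<alpha> = 0"
proof (induction \<alpha> rule: measure_induct_rule[of r])
  case (less \<alpha>)
  have "c \<beta> * B \<beta> (p \<alpha>) = 0" if "\<beta> \<in> C - {\<alpha>}" for \<beta>
    using that less triangular[of \<beta> \<alpha>] by fastforce
  then have "(\<Sum>\<beta>\<in>C - {\<alpha>}. c \<beta> * B \<beta> (p \<alpha>)) = 0"
    by (rule sum.neutral[rule_format])
  moreover have "(\<Sum>\<beta>\<in>C. c \<beta> * B \<beta> (p \<alpha>)) = c \<alpha> * B \<alpha> (p \<alpha>) + (\<Sum>\<beta>\<in>C - {\<alpha>}. c \<beta> * B \<beta> (p \<alpha>))"
    using sum.remove[OF finite_C less.prems] .
  ultimately show "c \<alpha> = 0"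
    using zero[of "p \<alpha>"] diagonal[OF less.prems] by simp
qed

lemma unitriangular_spans:
  assumes expand: "\<And>\<alpha> m. \<alpha> \<in> C \<Longrightarrow> B \<alpha> m = (\<Sum>\<gamma>\<in>C. B \<alpha> (p \<gamma>) * M \<gamma> m)"
  shows "\<gamma> \<in> C \<Longrightarrow> M \<gamma> \<in> family_span C B"
proof (induction \<gamma> rule: measure_induct_rule[of "\<lambda>\<gamma>. Max (r ` C) - r \<gamma>"])
  case (less \<gamma>)
  define X where "X = {\<gamma>' \<in> C - {\<gamma>}. B \<gamma> (p \<gamma>') \<noteq> 0}"
  have "M \<gamma>' \<in> family_span C B" if "\<gamma>' \<in> X" for \<gamma>'
  proof (rule less.IH)
    show "\<gamma>' \<in> C"
      using that X_def by blast
    then have "r \<gamma> < r \<gamma>'" "r \<gamma>' \<le> Max (r ` C)"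
      using that less.prems triangular finite_C unfolding X_def by auto
    then show "Max (r ` C) - r \<gamma>' < Max (r ` C) - r \<gamma>"
      by linarith
  qed
  then have "(\<lambda>m. B \<gamma> m - (\<Sum>\<gamma>'\<in>X. B \<gamma> (p \<gamma>') * M \<gamma>' m)) \<in> family_span C B"
    by (intro family_span_diff family_span_member[OF finite_C less.prems] family_span_sum)
  moreover have "B \<gamma> m - (\<Sum>\<gamma>'\<in>X. B \<gamma> (p \<gamma>') * M \<gamma>' m) = M \<gamma> m" for m
  proof -
    have "B \<gamma> m = B \<gamma> (p \<gamma>) * M \<gamma> m + (\<Sum>\<gamma>'\<in>C - {\<gamma>}. B \<gamma> (p \<gamma>') * M \<gamma>' m)"
      using expand[OF less.prems, of m] sum.remove[OF finite_C less.prems] by (rule trans)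
    also have "(\<Sum>\<gamma>'\<in>C - {\<gamma>}. B \<gamma> (p \<gamma>') * M \<gamma>' m) = (\<Sum>\<gamma>'\<in>X. B \<gamma> (p \<gamma>') * M \<gamma>' m)"
      using finite_C by (intro sum.mono_neutral_right) (auto simp: X_def)
    finally show ?thesis
      using diagonal[OF less.prems] by simp
  qed
  ultimately show ?case
    by simp
qed

end

lemma QSym_basis_if_unitriangular:
  fixes B :: "nat list \<Rightarrow> fps_x"
  assumes in_QSym: "\<And>\<alpha>. \<alpha> \<in> compositions n \<Longrightarrow> B \<alpha> \<in> QSym n"
    and diagonal: "\<And>\<alpha>. \<alpha> \<in> compositions n \<Longrightarrow> B \<alpha> (comp_monomial \<alpha>) = 1"
    and triangular: "\<And>\<alpha> \<gamma>. \<alpha> \<in> compositions n \<Longrightarrow> \<gamma> \<in> compositions n \<Longrightarrow> \<gamma> \<noteq> \<alpha> \<Longrightarrow>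
      B \<alpha> (comp_monomial \<gamma>) \<noteq> 0 \<Longrightarrow> length \<alpha> < length \<gamma>"
  shows "is_QSym_basis n B"
  unfolding is_QSym_basis_def
proof (intro conjI ballI allI impI)
  let ?C = "compositions n"
  note unitriangular = finite_compositions diagonal triangular
  show "B \<alpha> \<in> QSym n" if "\<alpha> \<in> ?C" for \<alpha>
    using in_QSym[OF that] .
  show "c \<alpha> = 0" if "\<forall>m. (\<Sum>\<alpha>\<in>?C. c \<alpha> * B \<alpha> m) = 0" "\<alpha> \<in> ?C" for c \<alpha>
    using unitriangular_independent[where B = B and p = comp_monomial and r = length,
        OF unitriangular] that by blast
  show "\<exists>c. \<forall>m. f m = (\<Sum>\<alpha>\<in>?C. c \<alpha> * B \<alpha> m)" if f: "f \<in> QSym n" for f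
  proof -
    have "monomial_qsym \<gamma> \<in> family_span ?C B" if "\<gamma> \<in> ?C" for \<gamma>
      using unitriangular_spans[where B = B and p = comp_monomial and r = length, OF unitriangular
          QSym_eq_sum_monomial_qsym[OF in_QSym] that] .
    then have "(\<lambda>m. \<Sum>\<gamma>\<in>?C. f (comp_monomial \<gamma>) * monomial_qsym \<gamma> m) \<in> family_span ?C B"
      by (intro family_span_sum)
    then obtain c where
      c: "\<And>m. (\<Sum>\<gamma>\<in>?C. f (comp_monomial \<gamma>) * monomial_qsym \<gamma> m) = (\<Sum>\<alpha>\<in>?C. c \<alpha> * B \<alpha> m)"
      unfolding family_span_def by blast
    show ?thesis
      using trans[OF QSym_eq_sum_monomial_qsym[OF f] c] by blast
  qed
qed

lemma verts_solid_sum_list: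
  "verts (solid_sum_list Gs) = (SIGMA j:{..<length Gs}. verts (Gs ! j))"
  unfolding solid_sum_list_def verts_def Let_def by auto

lemma edge_solid_sum_list:
  "edge (solid_sum_list Gs) (i, a) (j, b) =
     (if (i, a) \<in> verts (solid_sum_list Gs) \<and> (j, b) \<in> verts (solid_sum_list Gs) then
        (if i = j then edge (Gs ! i) a b else if i < j then Some Solid else None)
      else None)"
  unfolding solid_sum_list_def verts_def edge_def Let_def by simp

lemma ecdigraph_solid_sum_list:
  assumes "\<And>G. G \<in> set Gs \<Longrightarrow> ecdigraph G"
  shows "ecdigraph (solid_sum_list Gs)"
  unfolding ecdigraph_def
proof
  show "finite (verts (solid_sum_list Gs))"
    unfolding verts_solid_sum_list
    using assms[OF nth_mem] by (auto simp: ecdigraph_def)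
  show "\<forall>x y. edge (solid_sum_list Gs) x y \<noteq> None \<longrightarrow>
      x \<in> verts (solid_sum_list Gs) \<and> y \<in> verts (solid_sum_list Gs) \<and> x \<noteq> y"
  proof (intro allI impI)
    fix x y assume edge: "edge (solid_sum_list Gs) x y \<noteq> None"
    obtain i a j b where xy: "x = (i, a)" "y = (j, b)"
      by fastforce
    have "i < length Gs \<Longrightarrow> edge (Gs ! i) a b \<noteq> None \<Longrightarrow> a \<noteq> b"
      using assms[OF nth_mem] unfolding ecdigraph_def by auto
    then show "x \<in> verts (solid_sum_list Gs) \<and> y \<in> verts (solid_sum_list Gs) \<and> x \<noteq> y"
      using edge unfolding xy edge_solid_sum_list by (auto simp: verts_solid_sum_list split: if_splits)
  qed
qed

lemma card_verts_solid_sum_list: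
  assumes "\<And>G. G \<in> set Gs \<Longrightarrow> finite (verts G)"
  shows "card (verts (solid_sum_list Gs)) = (\<Sum>G\<leftarrow>Gs. card (verts G))"
proof -
  have "card (verts (solid_sum_list Gs)) = (\<Sum>j<length Gs. card (verts (Gs ! j)))"
    unfolding verts_solid_sum_list using assms by (simp add: card_SigmaI)
  also have "\<dots> = (\<Sum>G\<leftarrow>Gs. card (verts G))"
    by (simp add: sum_list_sum_nth atLeast0LessThan)
  finally show ?thesis .
qed

lemma chromX_solid_sum_list_in_QSym:
  assumes "\<And>G. G \<in> set Gs \<Longrightarrow> ecdigraph G"
  shows "chromX (solid_sum_list Gs) \<in> QSym (\<Sum>G\<leftarrow>Gs. card (verts G))"
  using chromX_in_QSym[OF ecdigraph_solid_sum_list[of Gs, OF assms]] card_verts_solid_sum_list[of Gs] assms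
  unfolding ecdigraph_def by simp

lemma strict_mono_on_lessThan_add_le:
  fixes f :: "nat \<Rightarrow> nat"
  assumes "strict_mono_on {..<k} f" "i \<le> j" "j < k"
  shows "f i + (j - i) \<le> f j"
  using assms(2,3)
proof (induction j)
  case (Suc j)
  show ?case
  proof (cases "i = Suc j")
    case False
    then have "f i + (j - i) \<le> f j"
      using Suc by simp
    moreover have "f j < f (Suc j)"
      using strict_mono_onD[OF assms(1)] Suc.prems by simp
    ultimately show ?thesis
      using False Suc.prems by simp
  qed simp
qed simp

lemma colourings_solid_sum_list:
  assumes blocks: "\<And>G. G \<in> set Gs \<Longrightarrow> ecdigraph G \<and> verts G \<noteq> {}"
    and \<kappa>: "\<kappa> \<in> colourings (solid_sum_list Gs) (comp_monomial \<gamma>)"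
  shows "length Gs \<le> length \<gamma>"
    and "length Gs = length \<gamma> \<Longrightarrow> (j, v) \<in> verts (solid_sum_list Gs) \<Longrightarrow> \<kappa> (j, v) = Suc j"
proof -
  let ?V = "verts (solid_sum_list Gs)" and ?k = "length Gs"
  have fin: "finite ?V"
    using ecdigraph_solid_sum_list blocks unfolding ecdigraph_def by blast
  have range: "1 \<le> \<kappa> x \<and> \<kappa> x \<le> length \<gamma>" if "x \<in> ?V" for x
    using colourings_colour_in_support[OF fin \<kappa> that] unfolding comp_monomial_def by (auto split: if_splits)
  have proper: "proper_colouring (solid_sum_list Gs) \<kappa>"
    using \<kappa> unfolding colourings_def by blast
  have chain: "strict_mono_on {..<?k} (\<lambda>i. \<kappa> (i, t i))"
    if t: "\<And>i. i < ?k \<Longrightarrow> t i \<in> verts (Gs ! i)" for t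
  proof (rule strict_mono_onI)
    fix i j assume "i \<in> {..<?k}" "j \<in> {..<?k}" "i < j"
    then have "edge (solid_sum_list Gs) (i, t i) (j, t j) = Some Solid"
      using t by (simp add: edge_solid_sum_list verts_solid_sum_list)
    then show "\<kappa> (i, t i) < \<kappa> (j, t j)"
      using proper unfolding proper_colouring_def by blast
  qed
  define s where "s i = (SOME v. v \<in> verts (Gs ! i))" for i
  have s: "s i \<in> verts (Gs ! i)" if "i < ?k" for i
    unfolding s_def using blocks[OF nth_mem[OF that]] by (simp add: some_in_eq)
  have bounds: "Suc i \<le> \<kappa> (i, t i) \<and> \<kappa> (i, t i) + (?k - Suc i) \<le> length \<gamma>"
    if t: "\<And>i. i < ?k \<Longrightarrow> t i \<in> verts (Gs ! i)" and i: "i < ?k" for t i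
  proof -
    have "0 < ?k" "?k - 1 < ?k"
      using i by linarith+
    then have "(0, t 0) \<in> ?V" "(?k - 1, t (?k - 1)) \<in> ?V"
      using t by (simp_all add: verts_solid_sum_list)
    then have "1 \<le> \<kappa> (0, t 0)" "\<kappa> (?k - 1, t (?k - 1)) \<le> length \<gamma>"
      using range by blast+
    moreover have "\<kappa> (0, t 0) + i \<le> \<kappa> (i, t i)"
      using strict_mono_on_lessThan_add_le[OF chain[OF t], of 0 i] i by simp
    moreover have "\<kappa> (i, t i) + (?k - 1 - i) \<le> \<kappa> (?k - 1, t (?k - 1))"
      using strict_mono_on_lessThan_add_le[OF chain[OF t], of i "?k - 1"] i by simp
    ultimately show ?thesis
      by linarith
  qed
  show "?k \<le> length \<gamma>"
    using bounds[OF s, of 0] by (cases ?k) auto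
  assume eq: "?k = length \<gamma>" and jv: "(j, v) \<in> ?V"
  then have "j < ?k" "v \<in> verts (Gs ! j)"
    by (auto simp: verts_solid_sum_list)
  then have "\<And>i. i < ?k \<Longrightarrow> (s(j := v)) i \<in> verts (Gs ! i)"
    using s by simp
  from bounds[OF this \<open>j < ?k\<close>] show "\<kappa> (j, v) = Suc j"
    using eq \<open>j < ?k\<close> by simp linarith
qed

lemma comp_monomial_inject:
  assumes "length \<gamma> = length \<delta>" "comp_monomial \<gamma> = comp_monomial \<delta>"
  shows "\<gamma> = \<delta>"
proof (rule nth_equalityI)
  fix j assume "j < length \<gamma>"
  then show "\<gamma> ! j = \<delta> ! j"
    using assms(1) fun_cong[OF assms(2), of "Suc j"] by (simp add: comp_monomial_def)
qed (rule assms(1))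

lemma card_colour_class_solid_sum_list:
  assumes "\<And>j v. (j, v) \<in> verts (solid_sum_list Gs) \<Longrightarrow> \<kappa> (j, v) = Suc j"
  shows "card {x \<in> verts (solid_sum_list Gs). \<kappa> x = i} = comp_monomial (map (\<lambda>G. card (verts G)) Gs) i"
proof (cases "1 \<le> i \<and> i \<le> length Gs")
  case True
  then have "{x \<in> verts (solid_sum_list Gs). \<kappa> x = i} = Pair (i - 1) ` verts (Gs ! (i - 1))"
    using assms by (force simp: verts_solid_sum_list)
  moreover have "i - 1 < length Gs"
    using True by linarith
  ultimately show ?thesis
    using True by (simp add: card_image inj_on_def comp_monomial_def)
next
  case False
  then have "{x \<in> verts (solid_sum_list Gs). \<kappa> x = i} = {}"
    using assms by (auto simp: verts_solid_sum_list)
  then have "card {x \<in> verts (solid_sum_list Gs). \<kappa> x = i} = 0"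
    by (simp only: card.empty)
  then show ?thesis
    using False by (auto simp: comp_monomial_def)
qed

lemma chromX_solid_sum_list_diagonal:
  assumes blocks: "\<And>G. G \<in> set Gs \<Longrightarrow>
      ecdigraph G \<and> verts G \<noteq> {} \<and> (\<forall>a b. edge G a b \<noteq> None \<longrightarrow> edge G a b = Some Double)"
  shows "chromX (solid_sum_list Gs) (comp_monomial (map (\<lambda>G. card (verts G)) Gs)) = 1"
proof -
  let ?V = "verts (solid_sum_list Gs)" and ?\<gamma> = "map (\<lambda>G. card (verts G)) Gs"
  define \<kappa>\<^sub>0 where "\<kappa>\<^sub>0 = restrict (\<lambda>(j, v). Suc j) ?V"
  have \<kappa>\<^sub>0_block: "\<kappa>\<^sub>0 (j, v) = Suc j" if "(j, v) \<in> ?V" for j v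
    using that unfolding \<kappa>\<^sub>0_def by simp
  have "proper_colouring (solid_sum_list Gs) \<kappa>\<^sub>0"
    unfolding proper_colouring_def
  proof (intro conjI allI ballI)
    fix x assume "x \<in> ?V"
    then show "1 \<le> \<kappa>\<^sub>0 x"
      unfolding \<kappa>\<^sub>0_def by (auto split: prod.splits)
  next
    fix x y :: "nat \<times> 'a"
    obtain i a j b where xy: "x = (i, a)" "y = (j, b)"
      by fastforce
    have double: "edge (Gs ! i) a b \<noteq> None \<Longrightarrow> edge (Gs ! i) a b = Some Double" if "i < length Gs"
      using blocks[OF nth_mem[OF that]] by blast
    show "edge (solid_sum_list Gs) x y = Some Dashed \<longrightarrow> \<kappa>\<^sub>0 x \<noteq> \<kappa>\<^sub>0 y"
      and "edge (solid_sum_list Gs) x y = Some Solid \<longrightarrow> \<kappa>\<^sub>0 x < \<kappa>\<^sub>0 y"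
      and "edge (solid_sum_list Gs) x y = Some Double \<longrightarrow> \<kappa>\<^sub>0 x \<le> \<kappa>\<^sub>0 y"
      using double unfolding xy edge_solid_sum_list
      by (auto simp: \<kappa>\<^sub>0_block verts_solid_sum_list split: if_splits)
  qed
  then have \<kappa>\<^sub>0_colouring: "\<kappa>\<^sub>0 \<in> colourings (solid_sum_list Gs) (comp_monomial ?\<gamma>)"
    unfolding colourings_def using card_colour_class_solid_sum_list[of Gs \<kappa>\<^sub>0] \<kappa>\<^sub>0_block
    by (auto simp: \<kappa>\<^sub>0_def)
  have "\<kappa> = \<kappa>\<^sub>0" if \<kappa>: "\<kappa> \<in> colourings (solid_sum_list Gs) (comp_monomial ?\<gamma>)" for \<kappa>
  proof (rule PiE_ext)
    show "\<kappa> \<in> ?V \<rightarrow>\<^sub>E UNIV" "\<kappa>\<^sub>0 \<in> ?V \<rightarrow>\<^sub>E UNIV"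
      using \<kappa> \<kappa>\<^sub>0_colouring unfolding colourings_def by auto
    fix x assume "x \<in> ?V"
    then show "\<kappa> x = \<kappa>\<^sub>0 x"
      using colourings_solid_sum_list(2)[OF _ \<kappa>] blocks \<kappa>\<^sub>0_block by (cases x) auto
  qed
  then have "colourings (solid_sum_list Gs) (comp_monomial ?\<gamma>) = {\<kappa>\<^sub>0}"
    using \<kappa>\<^sub>0_colouring by blast
  then show ?thesis
    unfolding chromX_eq_card_colourings by simp
qed

lemma chromX_solid_sum_list_off_diagonal:
  assumes blocks: "\<And>G. G \<in> set Gs \<Longrightarrow> ecdigraph G \<and> verts G \<noteq> {}"
    and nonzero: "chromX (solid_sum_list Gs) (comp_monomial \<gamma>) \<noteq> 0"
    and off_diagonal: "\<gamma> \<noteq> map (\<lambda>G. card (verts G)) Gs"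
  shows "length Gs < length \<gamma>"
proof -
  obtain \<kappa> where \<kappa>: "\<kappa> \<in> colourings (solid_sum_list Gs) (comp_monomial \<gamma>)"
    using nonzero unfolding chromX_eq_card_colourings by fastforce
  have "length Gs \<noteq> length \<gamma>"
  proof
    assume same_length: "length Gs = length \<gamma>"
    have "comp_monomial \<gamma> i = comp_monomial (map (\<lambda>G. card (verts G)) Gs) i" for i
      using \<kappa> card_colour_class_solid_sum_list[of Gs \<kappa> i]
        colourings_solid_sum_list(2)[OF blocks \<kappa> same_length]
      unfolding colourings_def by auto
    then show False
      using comp_monomial_inject[of \<gamma> "map (\<lambda>G. card (verts G)) Gs"] same_length off_diagonal
      by auto
  qed
  then show ?thesis
    using colourings_solid_sum_list(1)[OF blocks \<kappa>] by simp
qed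

theorem mainTheorem7:
  fixes F :: "nat \<Rightarrow> 'v ecdigraph" and n :: nat
  assumes "\<And>i. i \<ge> 1 \<Longrightarrow> ecdigraph (F i)"
      and "\<And>i. i \<ge> 1 \<Longrightarrow> card (verts (F i)) = i"
      and "\<And>i a b. i \<ge> 1 \<Longrightarrow> edge (F i) a b \<noteq> None \<Longrightarrow> edge (F i) a b = Some Double"
  shows "is_QSym_basis n (\<lambda>\<alpha>. chromX (solid_sum_list (map F \<alpha>)))"
proof (rule QSym_basis_if_unitriangular)
  fix \<alpha> assume \<alpha>: "\<alpha> \<in> compositions n"
  then have pos: "1 \<le> i" if "i \<in> set \<alpha>" for i
    using compositions_pos that by (simp add: Suc_le_eq)
  have blocks: "ecdigraph G \<and> verts G \<noteq> {} \<and> (\<forall>a b. edge G a b \<noteq> None \<longrightarrow> edge G a b = Some Double)"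
    if "G \<in> set (map F \<alpha>)" for G
  proof -
    obtain i where "1 \<le> i" "G = F i"
      using \<open>G \<in> set (map F \<alpha>)\<close> pos by auto
    then show ?thesis
      using assms by (metis card.empty not_one_le_zero)
  qed
  have sizes: "map (\<lambda>G. card (verts G)) (map F \<alpha>) = \<alpha>"
    using pos assms(2) by (simp add: map_idI)
  show "chromX (solid_sum_list (map F \<alpha>)) \<in> QSym n"
    using chromX_solid_sum_list_in_QSym[of "map F \<alpha>"] blocks sizes \<alpha>
    by (simp add: compositions_def del: map_map)
  show "chromX (solid_sum_list (map F \<alpha>)) (comp_monomial \<alpha>) = 1"
    using chromX_solid_sum_list_diagonal[of "map F \<alpha>"] blocks sizes by simp
  show "length \<alpha> < length \<gamma>"
    if "\<gamma> \<noteq> \<alpha>" "chromX (solid_sum_list (map F \<alpha>)) (comp_monomial \<gamma>) \<noteq> 0" for \<gamma>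
    using chromX_solid_sum_list_off_diagonal[of "map F \<alpha>" \<gamma>] blocks sizes that by simp
qed

end
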